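(* Let $p$ be a positive integer, let $J_1,\dots,J_p\in\mathcal{D}(X)$, and let $\ell_1,\dots,\ell_p$ be positive integers. Define the parallel rollout policy $\tilde\mu$ as follows. For each $x\in X$ and each $i=1,\dots,p$, let $\tilde J_i(x)$ be the optimal value of $$\min_{u_0,\dots,u_{\ell_i-1}}\ \sum_{k=0}^{\ell_i-1}g(x_k,u_k)+J_i(x_{\ell_i})\quad\text{s.t. } x_{k+1}=f(x_k,u_k),\ u_k\in U(x_k),\ k=0,\dots,\ell_i-1,\ x_0=x,$$ (equivalently $\tilde J_i(x)=(T^{\ell_i}J_i)(x)$), and let $(\tilde u_0^i,\dots,\tilde u_{\ell_i-1}^i)$ be a minimizing sequence; choose $\tilde i\in\arg\min_{i=1,\dots,p}\tilde J_i(x)$ and set $\tilde\mu(x)=\tilde u_0^{\tilde i}$. Let $\tilde J(x)=\min_{i=1,\dots,p}\tilde J_i(x)$. Then $J_{\tilde\mu}(x)\le\tilde J(x)$ for all $x\in X$.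
   Context: Setting: $X$ (state space) and $U$ (control space) are sets; for each $x\in X$, $U(x)\subset U$ is nonempty; $f:X\times U\to X$ gives dynamics $x_{k+1}=f(x_k,u_k)$; the stage cost $g$ satisfies $0\le g(x,u)\le\infty$ for all $x\in X$, $u\in U(x)$. A stationary policy is a map $\mu:X\to U$ with $\mu(x)\in U(x)$; its cost function is $J_\mu(x_0)=\sum_{k=0}^\infty g(x_k,\mu(x_k))$ with $x_{k+1}=f(x_k,\mu(x_k))$. $\mathcal{E}^+(X)$ denotes the set of all functions $J:X\to[0,\infty]$. The Bellman operator is $(TJ)(x)=\inf_{u\in U(x)}\{g(x,u)+J(f(x,u))\}$; $T^k$ is its $k$-fold composition. The region of decreasing is $\mathcal{D}(X)=\{J\in\mathcal{E}^+(X): (TJ)(x)\le J(x)\ \forall x\in X\}$. Standing assumption: for every $J\in\mathcal{E}^+(X)$ and every $x\in X$, the infimum defining $(TJ)(x)$ is attained. *)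

theory Defs
  imports "HOL-Analysis.Analysis"
begin

definition bellman :: "('x \<Rightarrow> 'u set) \<Rightarrow> ('x \<Rightarrow> 'u \<Rightarrow> 'x) \<Rightarrow> ('x \<Rightarrow> 'u \<Rightarrow> ennreal)
    \<Rightarrow> ('x \<Rightarrow> ennreal) \<Rightarrow> 'x \<Rightarrow> ennreal" where
  "bellman U f g J x = (INF u\<in>U x. g x u + J (f x u))"

definition region_decreasing :: "('x \<Rightarrow> 'u set) \<Rightarrow> ('x \<Rightarrow> 'u \<Rightarrow> 'x) \<Rightarrow> ('x \<Rightarrow> 'u \<Rightarrow> ennreal)
    \<Rightarrow> ('x \<Rightarrow> ennreal) set" where
  "region_decreasing U f g = {J. \<forall>x. bellman U f g J x \<le> J x}"

fun traj :: "('x \<Rightarrow> 'u \<Rightarrow> 'x) \<Rightarrow> 'x \<Rightarrow> (nat \<Rightarrow> 'u) \<Rightarrow> nat \<Rightarrow> 'x" where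
  "traj f x0 us 0 = x0"
| "traj f x0 us (Suc k) = f (traj f x0 us k) (us k)"

definition feasible :: "('x \<Rightarrow> 'u set) \<Rightarrow> ('x \<Rightarrow> 'u \<Rightarrow> 'x) \<Rightarrow> nat \<Rightarrow> 'x \<Rightarrow> (nat \<Rightarrow> 'u) \<Rightarrow> bool" where
  "feasible U f l x0 us \<longleftrightarrow> (\<forall>k<l. us k \<in> U (traj f x0 us k))"

definition lstep_cost :: "('x \<Rightarrow> 'u \<Rightarrow> 'x) \<Rightarrow> ('x \<Rightarrow> 'u \<Rightarrow> ennreal) \<Rightarrow> nat
    \<Rightarrow> ('x \<Rightarrow> ennreal) \<Rightarrow> 'x \<Rightarrow> (nat \<Rightarrow> 'u) \<Rightarrow> ennreal" where
  "lstep_cost f g l J x0 us =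
     (\<Sum>k<l. g (traj f x0 us k) (us k)) + J (traj f x0 us l)"

text \<open>Optimal value of the l-step lookahead problem (only u_0..u_{l-1} matter).\<close>
definition lstep_opt :: "('x \<Rightarrow> 'u set) \<Rightarrow> ('x \<Rightarrow> 'u \<Rightarrow> 'x) \<Rightarrow> ('x \<Rightarrow> 'u \<Rightarrow> ennreal) \<Rightarrow> nat
    \<Rightarrow> ('x \<Rightarrow> ennreal) \<Rightarrow> 'x \<Rightarrow> ennreal" where
  "lstep_opt U f g l J x0 = (INF us\<in>{us. feasible U f l x0 us}. lstep_cost f g l J x0 us)"

definition policy_cost :: "('x \<Rightarrow> 'u \<Rightarrow> 'x) \<Rightarrow> ('x \<Rightarrow> 'u \<Rightarrow> ennreal) \<Rightarrow> ('x \<Rightarrow> 'u) \<Rightarrow> 'x \<Rightarrow> ennreal" where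
  "policy_cost f g mu x0 =
     (\<Sum>k. g (((\<lambda>x. f x (mu x)) ^^ k) x0) (mu (((\<lambda>x. f x (mu x)) ^^ k) x0)))"

end

theory Submission
  imports Defs
begin

text \<open>Let \<open>V x\<close> be the minimum over \<open>i\<close> of the \<open>l i\<close>-step lookahead values. Since
  \<open>J i\<close> lies in the region of decreasing, appending a Bellman-minimizing control to a
  feasible sequence never increases its cost, so an \<open>l i\<close>-step lookahead is no worse than
  an \<open>(l i - 1)\<close>-step one. If \<open>i\<close> attains the minimum at \<open>x\<close> with minimizing sequence
  \<open>us\<close>, the tail of \<open>us\<close> is feasible from \<open>f x (us 0)\<close>, whence
  \<open>g x (mu x) + V (f x (mu x)) \<le> V x\<close>. Summing this along the closed-loop trajectory
  bounds every partial sum of the policy cost by \<open>V x\<close>, as \<open>V \<ge> 0\<close>.\<close>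

lemma traj_cong:
  "(\<And>j. j < k \<Longrightarrow> us j = vs j) \<Longrightarrow> traj f x us k = traj f x vs k"
  by (induction k) auto

lemma traj_Suc_shift:
  "traj f x us (Suc k) = traj f (f x (us 0)) (\<lambda>k. us (Suc k)) k"
  by (induction k) auto

lemma feasible_Suc_shift:
  "feasible U f (Suc m) x us \<longleftrightarrow>
     us 0 \<in> U x \<and> feasible U f m (f x (us 0)) (\<lambda>k. us (Suc k))"
  unfolding feasible_def by (auto simp: less_Suc_eq_0_disj traj_Suc_shift simp del: traj.simps(2))

lemma lstep_cost_Suc_shift:
  "lstep_cost f g (Suc m) J x us =
     g x (us 0) + lstep_cost f g m J (f x (us 0)) (\<lambda>k. us (Suc k))"
  unfolding lstep_cost_def sum.lessThan_Suc_shift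
  by (simp add: traj_Suc_shift add.assoc del: traj.simps(2))

lemma lstep_opt_le_lstep_cost:
  "feasible U f m x us \<Longrightarrow> lstep_opt U f g m J x \<le> lstep_cost f g m J x us"
  unfolding lstep_opt_def by (rule INF_lower) simp

lemma lstep_cost_extend_le:
  assumes decreasing: "J \<in> region_decreasing U f g"
    and attained: "\<And>y. \<exists>u\<in>U y. bellman U f g J y = g y u + J (f y u)"
    and feasible: "feasible U f m x vs"
  obtains ws where "feasible U f (Suc m) x ws"
    and "lstep_cost f g (Suc m) J x ws \<le> lstep_cost f g m J x vs"
proof -
  define y where "y = traj f x vs m"
  obtain u where u: "u \<in> U y" and u_opt: "bellman U f g J y = g y u + J (f y u)"
    using attained by blast
  define ws where "ws = vs(m := u)"
  have traj_ws: "traj f x ws k = traj f x vs k" if "k \<le> m" for k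
    using that by (intro traj_cong) (auto simp: ws_def)
  have "ws k \<in> U (traj f x ws k)" if "k < Suc m" for k
  proof (cases "k < m")
    case True
    then show ?thesis using feasible traj_ws[of k] by (simp add: feasible_def ws_def)
  next
    case False
    with that have "k = m" by simp
    then show ?thesis using u traj_ws[of m] by (simp add: ws_def y_def)
  qed
  then have ws_feasible: "feasible U f (Suc m) x ws"
    unfolding feasible_def by blast
  have "g y u + J (f y u) \<le> J y"
    using decreasing u_opt unfolding region_decreasing_def by (metis mem_Collect_eq)
  then have "lstep_cost f g (Suc m) J x ws \<le> lstep_cost f g m J x vs"
    using traj_ws by (simp add: lstep_cost_def add.assoc ws_def y_def add_left_mono)
  with ws_feasible show ?thesis by (rule that)
qed

lemma lstep_opt_Suc_le:
  assumes "J \<in> region_decreasing U f g"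
    and "\<And>y. \<exists>u\<in>U y. bellman U f g J y = g y u + J (f y u)"
  shows "lstep_opt U f g (Suc m) J x \<le> lstep_opt U f g m J x"
  unfolding lstep_opt_def[of _ _ _ m]
proof (rule INF_greatest)
  fix vs assume "vs \<in> {vs. feasible U f m x vs}"
  then obtain ws where ws: "feasible U f (Suc m) x ws"
      and ws_cost: "lstep_cost f g (Suc m) J x ws \<le> lstep_cost f g m J x vs"
    using lstep_cost_extend_le[OF assms] by blast
  have "lstep_opt U f g (Suc m) J x \<le> lstep_cost f g (Suc m) J x ws"
    using ws by (rule lstep_opt_le_lstep_cost)
  also note ws_cost
  finally show "lstep_opt U f g (Suc m) J x \<le> lstep_cost f g m J x vs" .
qed

lemma lstep_opt_first_control_decrease:
  assumes "J \<in> region_decreasing U f g"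
    and "\<And>y. \<exists>u\<in>U y. bellman U f g J y = g y u + J (f y u)"
    and feasible: "feasible U f (Suc m) x us"
    and optimal: "lstep_cost f g (Suc m) J x us = lstep_opt U f g (Suc m) J x"
  shows "g x (us 0) + lstep_opt U f g (Suc m) J (f x (us 0)) \<le> lstep_opt U f g (Suc m) J x"
proof -
  let ?y = "f x (us 0)" and ?vs = "\<lambda>k. us (Suc k)"
  have "lstep_opt U f g (Suc m) J ?y \<le> lstep_opt U f g m J ?y"
    using assms(1,2) by (rule lstep_opt_Suc_le)
  also have "\<dots> \<le> lstep_cost f g m J ?y ?vs"
    using feasible by (intro lstep_opt_le_lstep_cost) (simp add: feasible_Suc_shift)
  finally have "g x (us 0) + lstep_opt U f g (Suc m) J ?y \<le> g x (us 0) + lstep_cost f g m J ?y ?vs"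
    by (rule add_left_mono)
  also have "\<dots> = lstep_opt U f g (Suc m) J x"
    using optimal by (simp add: lstep_cost_Suc_shift)
  finally show ?thesis .
qed

lemma policy_cost_le_of_decrease:
  assumes decrease: "\<And>x. g x (mu x) + V (f x (mu x)) \<le> V x"
  shows "policy_cost f g mu x \<le> V x"
proof -
  define F where "F x = f x (mu x)" for x
  have partial: "(\<Sum>k<n. g ((F ^^ k) x) (mu ((F ^^ k) x))) + V ((F ^^ n) x) \<le> V x" for n x
  proof (induction n arbitrary: x)
    case 0
    then show ?case by simp
  next
    case (Suc n)
    have "(\<Sum>k<Suc n. g ((F ^^ k) x) (mu ((F ^^ k) x))) + V ((F ^^ Suc n) x)
        = g x (mu x) + ((\<Sum>k<n. g ((F ^^ k) (F x)) (mu ((F ^^ k) (F x)))) + V ((F ^^ n) (F x)))"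
      unfolding sum.lessThan_Suc_shift by (simp add: funpow_Suc_right add.assoc del: funpow.simps)
    also have "\<dots> \<le> g x (mu x) + V (F x)" by (intro add_left_mono Suc.IH)
    also have "\<dots> \<le> V x" unfolding F_def by (rule decrease)
    finally show ?case .
  qed
  have "policy_cost f g mu x = (SUP n. \<Sum>k<n. g ((F ^^ k) x) (mu ((F ^^ k) x)))"
    unfolding policy_cost_def F_def by (rule suminf_eq_SUP)
  also have "\<dots> \<le> V x"
    using partial by (intro SUP_least) (meson add_increasing2 order_trans zero_le order_refl)
  finally show ?thesis .
qed

theorem proposition4:
  fixes U :: "'x \<Rightarrow> 'u set" and f :: "'x \<Rightarrow> 'u \<Rightarrow> 'x" and g :: "'x \<Rightarrow> 'u \<Rightarrow> ennreal"
    and p :: nat and J :: "nat \<Rightarrow> 'x \<Rightarrow> ennreal" and l :: "nat \<Rightarrow> nat"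
    and mu :: "'x \<Rightarrow> 'u"
  assumes U_nonempty: "\<And>x. U x \<noteq> {}"
    and attained: "\<And>(J' :: 'x \<Rightarrow> ennreal) x. \<exists>u\<in>U x. bellman U f g J' x = g x u + J' (f x u)"
    and p_pos: "p \<ge> 1"
    and J_dec: "\<And>i. i \<in> {1..p} \<Longrightarrow> J i \<in> region_decreasing U f g"
    and l_pos: "\<And>i. i \<in> {1..p} \<Longrightarrow> l i \<ge> 1"
    and mu_def: "\<And>x. \<exists>i\<in>{1..p}. \<exists>us.
        lstep_opt U f g (l i) (J i) x = Min ((\<lambda>j. lstep_opt U f g (l j) (J j) x) ` {1..p})
        \<and> feasible U f (l i) x us
        \<and> lstep_cost f g (l i) (J i) x us = lstep_opt U f g (l i) (J i) x
        \<and> mu x = us 0"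
  shows "\<forall>x. policy_cost f g mu x \<le> Min ((\<lambda>i. lstep_opt U f g (l i) (J i) x) ` {1..p})"
proof (intro allI policy_cost_le_of_decrease)
  fix x
  let ?Jt = "\<lambda>x. Min ((\<lambda>i. lstep_opt U f g (l i) (J i) x) ` {1..p})"
  obtain i us where i: "i \<in> {1..p}" and min: "lstep_opt U f g (l i) (J i) x = ?Jt x"
    and feasible: "feasible U f (l i) x us"
    and optimal: "lstep_cost f g (l i) (J i) x us = lstep_opt U f g (l i) (J i) x"
    and mu: "mu x = us 0"
    using mu_def[of x] by blast
  obtain m where m: "l i = Suc m" using l_pos[OF i] by (cases "l i") auto
  have "?Jt (f x (mu x)) \<le> lstep_opt U f g (l i) (J i) (f x (mu x))"
    using i by (intro Min_le) auto
  then have "g x (mu x) + ?Jt (f x (mu x)) \<le> g x (us 0) + lstep_opt U f g (l i) (J i) (f x (us 0))"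
    by (simp add: mu add_left_mono)
  also have "\<dots> \<le> lstep_opt U f g (l i) (J i) x"
    using feasible optimal unfolding m
    by (rule lstep_opt_first_control_decrease[OF J_dec[OF i] attained])
  also have "\<dots> = ?Jt x" by (rule min)
  finally show "g x (mu x) + ?Jt (f x (mu x)) \<le> ?Jt x" .
qed

end
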